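(* Let $\ell,m\ge0$ be integers and fix signs $\delta_1,\dots,\delta_m\in\{-1,1\}$. For $\epsilon\in\mathbb{R}$ let $N^\epsilon=\{(u,v)\in\mathbb{H}^\ell\times\mathbb{T}^m\mid \sum_{i=1}^\ell u_i+\sum_{j=1}^m(\delta_j v_{2j-1}-v_{2j})\le\epsilon\}$. Then for every $\epsilon>0$ the set $N^\epsilon$ is homotopy-equivalent to $N^{-\epsilon}$ with an $m$-dimensional cell attached.
   Context: $\mathbb{H}=[0,\infty)$, $\mathbb{T}=\{(a,b)\in\mathbb{R}^2\mid ab=0,\ b\ge0\}$, and $v\in\mathbb{T}^m\subset\mathbb{R}^{2m}$ means $(v_{2j-1},v_{2j})\in\mathbb{T}$ for $j=1,\dots,m$. *)

theory Defs
  imports "HOL-Analysis.Analysis"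
begin

text \<open>Points of H^l x T^m are pairs (u,v) of real sequences, u supported on {1..l},
 v supported on {1..2m} (coordinates outside are zero), with the product topology
 (which on such finitely supported vectors is the Euclidean topology).\<close>

definition HT :: "nat \<Rightarrow> nat \<Rightarrow> ((nat \<Rightarrow> real) \<times> (nat \<Rightarrow> real)) set" where
  "HT l m = {(u, v). (\<forall>i. i \<notin> {1..l} \<longrightarrow> u i = 0) \<and> (\<forall>i\<in>{1..l}. u i \<ge> 0)
       \<and> (\<forall>i. i \<notin> {1..2*m} \<longrightarrow> v i = 0)
       \<and> (\<forall>j\<in>{1..m}. v (2*j-1) * v (2*j) = 0 \<and> v (2*j) \<ge> 0)}"

definition Neps :: "nat \<Rightarrow> nat \<Rightarrow> (nat \<Rightarrow> real) \<Rightarrow> real \<Rightarrow> ((nat \<Rightarrow> real) \<times> (nat \<Rightarrow> real)) set" where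
  "Neps l m \<delta> \<epsilon> = {(u, v) \<in> HT l m.
      (\<Sum>i=1..l. u i) + (\<Sum>j=1..m. \<delta> j * v (2*j-1) - v (2*j)) \<le> \<epsilon>}"

definition cdisc :: "nat \<Rightarrow> (nat \<Rightarrow> real) set" where
  "cdisc m = {x. (\<forall>i. i \<notin> {1..m} \<longrightarrow> x i = 0) \<and> (\<Sum>i=1..m. (x i)^2) \<le> 1}"

definition csphere :: "nat \<Rightarrow> (nat \<Rightarrow> real) set" where
  "csphere m = {x. (\<forall>i. i \<notin> {1..m} \<longrightarrow> x i = 0) \<and> (\<Sum>i=1..m. (x i)^2) = 1}"

text \<open>Z is obtained from X by attaching an m-cell along some attaching map g:
 Z is the pushout (adjunction space) X \<union>_g D^m, characterised by the inclusion i,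
 the characteristic map \<Phi>, and the coherent (quotient) topology.\<close>

definition cell_attached :: "'a topology \<Rightarrow> nat \<Rightarrow> 'b topology \<Rightarrow> bool" where
  "cell_attached X m Z \<longleftrightarrow>
    (\<exists>g i \<Phi>. continuous_map (top_of_set (csphere m)) X g
      \<and> continuous_map X Z i \<and> continuous_map (top_of_set (cdisc m)) Z \<Phi>
      \<and> (\<forall>x\<in>csphere m. \<Phi> x = i (g x))
      \<and> inj_on i (topspace X) \<and> inj_on \<Phi> (cdisc m - csphere m)
      \<and> i ` topspace X \<inter> \<Phi> ` (cdisc m - csphere m) = {}
      \<and> topspace Z = i ` topspace X \<union> \<Phi> ` cdisc m
      \<and> (\<forall>U. U \<subseteq> topspace Z \<longrightarrow>
            (openin Z U \<longleftrightarrow> openin X (topspace X \<inter> i -` U)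
                              \<and> openin (top_of_set (cdisc m)) (cdisc m \<inter> \<Phi> -` U))))"

end

theory Submission
  imports Defs
begin

text \<open>
For \<epsilon> > 0 both spaces are contractible, so they are homotopy equivalent; the work is to
realise N^{-\<epsilon>} with an m-cell attached concretely. On the j-th factor of T^m the summand
\<delta>_j v_{2j-1} - v_{2j} of the level equals -|s| along the half of the tee where
\<delta>_j v_{2j-1} \<le> 0, parametrised by s \<in> \<real>. Taking s_j = \<epsilon> x_j |x_j| embeds the disc D^m at
level -\<epsilon>|x|^2: the boundary sphere lands in N^{-\<epsilon>} and the open cell outside it, and since
the disc is compact and the ambient space Hausdorff, the union carries the adjunction
topology. The union is contractible: shrinking the H-coordinates and the ascending half of
every tee lowers the level and fixes the cell, and what remains is a cone of descending
points, each of which lies in N^{-\<epsilon>} or in the cell.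
\<close>

lemma continuous_on_apply [continuous_intros]:
  "continuous_on S (\<lambda>x. x i :: 'a::topological_space)"
  by (rule continuous_on_product_then_coordinatewise[OF continuous_on_id])

lemma continuous_on_fst_apply [continuous_intros]:
  "continuous_on S f \<Longrightarrow> continuous_on S (\<lambda>x. fst (f x) i :: 'a::topological_space)"
  by (rule continuous_on_product_then_coordinatewise[OF continuous_on_fst])

lemma continuous_on_snd_apply [continuous_intros]:
  "continuous_on S f \<Longrightarrow> continuous_on S (\<lambda>x. snd (f x) i :: 'a::topological_space)"
  by (rule continuous_on_product_then_coordinatewise[OF continuous_on_snd])

lemma homotopic_with_canonI:
  assumes "continuous_on ({0..1::real} \<times> S) h" "h ` ({0..1} \<times> S) \<subseteq> T"
    and "\<And>x. h (0, x) = f x" "\<And>x. h (1, x) = g x"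
  shows "homotopic_with_canon (\<lambda>x. True) S T f g"
  unfolding homotopic_with_def by (rule exI[of _ h]) (use assms in auto)

lemma contractible_space_imp_homotopy_equivalent_space:
  assumes "contractible_space X" "contractible_space Y" "a \<in> topspace X" "b \<in> topspace Y"
  shows "X homotopy_equivalent_space Y"
  unfolding homotopy_equivalent_space_def
  by (intro exI[of _ "\<lambda>x. b"] exI[of _ "\<lambda>x. a"])
    (use assms in \<open>auto intro!: homotopic_into_contractible_space\<close>)

lemma closed_cdisc: "closed (cdisc m)"
proof -
  have "cdisc m = (\<Inter>i\<in>-{1..m}. {x. x i = 0}) \<inter> {x. (\<Sum>i=1..m. (x i)^2) \<le> 1}"
    by (auto simp: cdisc_def)
  also have "closed \<dots>"
    by (intro closed_Int closed_INT ballI closed_Collect_eq closed_Collect_le continuous_intros)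
  finally show ?thesis .
qed

lemma compact_cdisc: "compact (cdisc m)"
proof -
  define S where "S = (\<lambda>i::nat. if i \<in> {1..m} then {-1..1::real} else {0})"
  have "compactin (product_topology (\<lambda>i. euclidean) UNIV) (PiE UNIV S)"
    unfolding compactin_PiE by (auto simp: S_def)
  then have c: "compact (PiE UNIV S)"
    by (simp add: euclidean_product_topology)
  have "cdisc m \<subseteq> PiE UNIV S"
  proof
    fix x assume x: "x \<in> cdisc m"
    have "x i \<in> S i" for i
    proof (cases "i \<in> {1..m}")
      case True
      have "(x i)^2 \<le> (\<Sum>i=1..m. (x i)^2)"
        by (rule member_le_sum) (use True in auto)
      also have "\<dots> \<le> 1"
        using x by (simp add: cdisc_def)
      finally have "\<bar>x i\<bar> \<le> 1"
        by (simp add: abs_square_le_1)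
      then show ?thesis
        using True by (auto simp: S_def)
    next
      case False
      then show ?thesis
        using x by (auto simp: S_def cdisc_def)
    qed
    then show "x \<in> PiE UNIV S"
      by auto
  qed
  then show ?thesis
    using compact_Int_closed[OF c closed_cdisc[of m]] by (simp add: Int_absorb1 Int_absorb2)
qed

lemma csphere_subset_cdisc: "csphere m \<subseteq> cdisc m"
  by (auto simp: csphere_def cdisc_def)

lemma openin_Un_compact_image:
  fixes \<Phi> :: "'a::topological_space \<Rightarrow> 'b::t2_space"
  assumes "compact D" "continuous_on D \<Phi>" "closed A" "W \<subseteq> A \<union> \<Phi> ` D"
    and "openin (top_of_set A) (A \<inter> W)" "openin (top_of_set D) (D \<inter> \<Phi> -` W)"
  shows "openin (top_of_set (A \<union> \<Phi> ` D)) W"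
proof -
  have "closedin (top_of_set A) (A - W)"
    using closedin_diff[OF closedin_topspace assms(5)] by (simp add: Diff_Int)
  then have closed_A: "closed (A - W)"
    using \<open>closed A\<close> closedin_closed_trans by blast
  have "closedin (top_of_set D) (D - \<Phi> -` W)"
    using closedin_diff[OF closedin_topspace assms(6)] by (simp add: Diff_Int)
  then have "compact (\<Phi> ` (D - \<Phi> -` W))"
    using assms(1,2) closedin_compact
    by (metis compact_continuous_image continuous_on_subset Diff_subset)
  then have "closed (A - W \<union> \<Phi> ` (D - \<Phi> -` W))"
    using closed_A by (simp add: closed_Un compact_imp_closed)
  moreover have "A \<union> \<Phi> ` D - W = A - W \<union> \<Phi> ` (D - \<Phi> -` W)"
    by blast
  ultimately have "closedin (top_of_set (A \<union> \<Phi> ` D)) (A \<union> \<Phi> ` D - W)"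
    by (metis closed_subset Diff_subset)
  then show ?thesis
    using assms(4) by (simp add: openin_closedin_eq Diff_Diff_Int Int_absorb1)
qed

lemma cell_attached_subspace:
  fixes \<Phi> :: "(nat \<Rightarrow> real) \<Rightarrow> 'a::t2_space"
  assumes \<Phi>: "continuous_on (cdisc m) \<Phi>" and A: "closed A" "\<Phi> ` csphere m \<subseteq> A"
    and cell: "inj_on \<Phi> (cdisc m - csphere m)" "A \<inter> \<Phi> ` (cdisc m - csphere m) = {}"
  shows "cell_attached (top_of_set A) m (top_of_set (A \<union> \<Phi> ` cdisc m))"
proof -
  let ?Y = "A \<union> \<Phi> ` cdisc m"
  have quotient: "openin (top_of_set ?Y) U \<longleftrightarrow>
      openin (top_of_set A) (A \<inter> U) \<and> openin (top_of_set (cdisc m)) (cdisc m \<inter> \<Phi> -` U)"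
    if "U \<subseteq> ?Y" for U
  proof
    assume U: "openin (top_of_set ?Y) U"
    then obtain T where "open T" "U = ?Y \<inter> T"
      by (auto simp: openin_open)
    then have "openin (top_of_set A) (A \<inter> U)"
      by (simp add: openin_open_Int Int_absorb1 flip: Int_assoc)
    moreover have "openin (top_of_set (cdisc m)) (cdisc m \<inter> \<Phi> -` U)"
      using continuous_openin_preimage[OF \<Phi> _ U] by blast
    ultimately show "openin (top_of_set A) (A \<inter> U) \<and> openin (top_of_set (cdisc m)) (cdisc m \<inter> \<Phi> -` U)" ..
  qed (use openin_Un_compact_image[OF compact_cdisc \<Phi> A(1) that] in blast)
  show ?thesis
    unfolding cell_attached_def
    by (intro exI[of _ \<Phi>] exI[of _ id])
      (use continuous_on_subset[OF \<Phi> csphere_subset_cdisc] \<Phi> A cell quotient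
        in \<open>auto simp: continuous_map_in_subtopology\<close>)
qed

lemma cell_attached_homeomorphic_space:
  assumes "cell_attached X m Z" and "Z homeomorphic_space Z'"
  shows "cell_attached X m Z'"
proof -
  obtain g i \<Phi> where g: "continuous_map (top_of_set (csphere m)) X g"
    and i: "continuous_map X Z i" and \<Phi>: "continuous_map (top_of_set (cdisc m)) Z \<Phi>"
    and glue: "\<forall>x\<in>csphere m. \<Phi> x = i (g x)"
    and inj: "inj_on i (topspace X)" "inj_on \<Phi> (cdisc m - csphere m)"
    and disj: "i ` topspace X \<inter> \<Phi> ` (cdisc m - csphere m) = {}"
    and top: "topspace Z = i ` topspace X \<union> \<Phi> ` cdisc m"
    and quot: "\<And>U. U \<subseteq> topspace Z \<Longrightarrow> openin Z U \<longleftrightarrow> openin X (topspace X \<inter> i -` U)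
                  \<and> openin (top_of_set (cdisc m)) (cdisc m \<inter> \<Phi> -` U)"
    using assms(1) unfolding cell_attached_def by metis
  obtain f where f: "homeomorphic_map Z Z' f"
    using assms(2) homeomorphic_space by blast
  have f_inj: "inj_on f (topspace Z)" and f_onto: "f ` topspace Z = topspace Z'"
    using f homeomorphic_imp_injective_map homeomorphic_imp_surjective_map by blast+
  have i_into: "i ` topspace X \<subseteq> topspace Z" and \<Phi>_into: "\<Phi> ` cdisc m \<subseteq> topspace Z"
    using top by auto
  have quot': "openin Z' U \<longleftrightarrow> openin X (topspace X \<inter> (f \<circ> i) -` U)
                  \<and> openin (top_of_set (cdisc m)) (cdisc m \<inter> (f \<circ> \<Phi>) -` U)"
    if "U \<subseteq> topspace Z'" for U
  proof -
    have "f ` (topspace Z \<inter> f -` U) = U"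
      using that f_onto by fastforce
    then have "openin Z' U \<longleftrightarrow> openin Z (topspace Z \<inter> f -` U)"
      using homeomorphic_map_openness[OF f, of "topspace Z \<inter> f -` U"] by simp
    also have "\<dots> \<longleftrightarrow> openin X (topspace X \<inter> (f \<circ> i) -` U)
                  \<and> openin (top_of_set (cdisc m)) (cdisc m \<inter> (f \<circ> \<Phi>) -` U)"
    proof -
      have "topspace X \<inter> i -` (topspace Z \<inter> f -` U) = topspace X \<inter> (f \<circ> i) -` U"
        using i_into by auto
      moreover have "cdisc m \<inter> \<Phi> -` (topspace Z \<inter> f -` U) = cdisc m \<inter> (f \<circ> \<Phi>) -` U"
        using \<Phi>_into by auto
      ultimately show ?thesis
        using quot[of "topspace Z \<inter> f -` U"] by simp
    qed
    finally show ?thesis .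
  qed
  have "inj_on (f \<circ> i) (topspace X)" "inj_on (f \<circ> \<Phi>) (cdisc m - csphere m)"
    using inj f_inj i_into \<Phi>_into by (auto intro!: comp_inj_on inj_on_subset[OF f_inj])
  moreover have "(f \<circ> i) ` topspace X \<inter> (f \<circ> \<Phi>) ` (cdisc m - csphere m) = {}"
  proof -
    have "\<Phi> ` (cdisc m - csphere m) \<subseteq> topspace Z"
      using \<Phi>_into by blast
    then show ?thesis
      using inj_on_image_Int[OF f_inj i_into] disj by (metis image_comp image_empty)
  qed
  moreover have "topspace Z' = (f \<circ> i) ` topspace X \<union> (f \<circ> \<Phi>) ` cdisc m"
    using f_onto top by (simp add: image_comp image_Un)
  moreover have "continuous_map X Z' (f \<circ> i)" "continuous_map (top_of_set (cdisc m)) Z' (f \<circ> \<Phi>)"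
    using f i \<Phi> homeomorphic_imp_continuous_map continuous_map_compose by blast+
  ultimately show ?thesis
    unfolding cell_attached_def
    by (intro exI[of _ g] exI[of _ "f \<circ> i"] exI[of _ "f \<circ> \<Phi>"]) (use g glue quot' in auto)
qed

lemma homeomorphic_space_Inl:
  fixes X :: "'a topology"
  shows "X homeomorphic_space (pullback_topology (Inl ` topspace X) projl X :: ('a + 'b) topology)"
proof -
  let ?Z = "pullback_topology (Inl ` topspace X) projl X :: ('a + 'b) topology"
  have "continuous_map ?Z X projl"
    by (metis continuous_map_id continuous_map_pullback id_comp)
  moreover have "continuous_map X ?Z Inl"
    by (rule continuous_map_pullback') (auto simp: o_def)
  ultimately show ?thesis
    unfolding homeomorphic_space_def homeomorphic_maps_def
    by (intro exI[of _ Inl] exI[of _ projl]) (auto simp: topspace_pullback_topology)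
qed

type_synonym point = "(nat \<Rightarrow> real) \<times> (nat \<Rightarrow> real)"

definition level :: "nat \<Rightarrow> nat \<Rightarrow> (nat \<Rightarrow> real) \<Rightarrow> point \<Rightarrow> real" where
  "level l m \<delta> p = (\<Sum>i=1..l. fst p i) + (\<Sum>j=1..m. \<delta> j * snd p (2*j-1) - snd p (2*j))"

lemma Neps_eq_sublevel: "Neps l m \<delta> e = {p \<in> HT l m. level l m \<delta> p \<le> e}"
  by (auto simp: Neps_def level_def)

lemma continuous_on_level [continuous_intros]: "continuous_on S (level l m \<delta>)"
  unfolding level_def by (intro continuous_intros)

lemma closed_HT: "closed (HT l m)"
proof -
  have "HT l m = (\<Inter>i\<in>-{1..l}. {p. fst p i = 0}) \<inter> (\<Inter>i\<in>{1..l}. {p. fst p i \<ge> 0})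
     \<inter> (\<Inter>i\<in>-{1..2*m}. {p. snd p i = 0})
     \<inter> (\<Inter>j\<in>{1..m}. {p. snd p (2*j-1) * snd p (2*j) = 0} \<inter> {p. snd p (2*j) \<ge> 0})"
    by (auto simp: HT_def)
  also have "closed \<dots>"
    by (intro closed_Int closed_INT ballI closed_Collect_eq closed_Collect_le continuous_intros)
  finally show ?thesis .
qed

lemma closed_Neps: "closed (Neps l m \<delta> e)"
proof -
  have "Neps l m \<delta> e = HT l m \<inter> {p. level l m \<delta> p \<le> e}"
    by (auto simp: Neps_eq_sublevel)
  then show ?thesis
    by (simp add: closed_Int closed_HT closed_Collect_le continuous_on_level continuous_on_const)
qed

definition dilate :: "real \<Rightarrow> point \<Rightarrow> point" where
  "dilate c p = ((\<lambda>i. c * fst p i), (\<lambda>k. c * snd p k))"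

lemma continuous_on_dilate [continuous_intros]:
  "continuous_on S f \<Longrightarrow> continuous_on S g \<Longrightarrow> continuous_on S (\<lambda>x. dilate (f x) (g x))"
  unfolding dilate_def by (intro continuous_intros continuous_on_coordinatewise_then_product)

lemma HT_dilate: "p \<in> HT l m \<Longrightarrow> 0 \<le> c \<Longrightarrow> dilate c p \<in> HT l m"
  by (auto simp: HT_def dilate_def mult.left_commute[of c])

lemma level_dilate: "level l m \<delta> (dilate c p) = c * level l m \<delta> p"
  by (simp add: level_def dilate_def sum_distrib_left algebra_simps sum.distrib sum_subtractf)

lemma contractible_Neps:
  assumes "0 \<le> e"
  shows "contractible (Neps l m \<delta> e)"
proof -
  have "homotopic_with_canon (\<lambda>x. True) (Neps l m \<delta> e) (Neps l m \<delta> e)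
          id (\<lambda>_. ((\<lambda>_. 0), (\<lambda>_. 0)))"
  proof (rule homotopic_with_canonI[where h="\<lambda>z. dilate (1 - fst z) (snd z)"])
    show "(\<lambda>z. dilate (1 - fst z) (snd z)) ` ({0..1} \<times> Neps l m \<delta> e) \<subseteq> Neps l m \<delta> e"
    proof (rule image_subsetI)
      fix z assume "z \<in> {0..1::real} \<times> Neps l m \<delta> e"
      then obtain t p where z: "z = (t, p)" and t: "t \<in> {0..1}" and p: "p \<in> Neps l m \<delta> e"
        by blast
      have "(1 - t) * level l m \<delta> p \<le> max 0 (level l m \<delta> p)"
        using t by (simp add: mult_left_le_one_le mult_nonneg_nonpos max_def)
      then show "dilate (1 - fst z) (snd z) \<in> Neps l m \<delta> e"
        using assms z t p by (auto simp: Neps_eq_sublevel level_dilate intro: HT_dilate)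
    qed
  qed (auto simp: dilate_def intro!: continuous_intros)
  then show ?thesis
    unfolding contractible_def by blast
qed

lemma sign_mult_self:
  assumes "\<forall>j\<in>{1..m}. \<delta> j = -1 \<or> \<delta> j = 1" and "j \<in> {1..m}"
  shows "\<delta> j * \<delta> j = (1::real)"
  using bspec[OF assms] by auto

lemma index_pair_cases:
  fixes k m :: nat
  assumes "k \<in> {1..2*m}"
  obtains j where "j \<in> {1..m}" "k = 2*j" | j where "j \<in> {1..m}" "k = 2*j-1"
proof (cases "even k")
  case True
  then obtain j where "k = 2*j" by (auto elim: evenE)
  then show ?thesis using that(1)[of j] assms by auto
next
  case False
  then obtain j where "k = 2*j+1" by (auto elim: oddE)
  then show ?thesis using that(2)[of "j+1"] assms by auto
qed

text \<open>Isabelle's sqrt is odd on all of \<real>, so it inverts t \<mapsto> t |t|.\<close>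

lemma sqrt_mult_abs_self: "sqrt (x * \<bar>x\<bar>) = x"
  by (cases "x \<ge> 0") (auto simp: real_sqrt_minus)

lemma sqrt_mult_abs_sqrt: "sqrt x * \<bar>sqrt x\<bar> = x"
proof (cases "x \<ge> 0")
  case False
  then have "sqrt x = - sqrt (- x)"
    by (simp add: real_sqrt_minus)
  with False show ?thesis
    by simp
qed simp

text \<open>Coordinates 2j-1, 2j of tee_param m \<delta> s are (\<delta>_j min(s_j, 0), max(s_j, 0)): this maps
\<real> onto the half of the j-th tee where \<delta>_j v_{2j-1} \<le> 0, with inverse v_{2j} + \<delta>_j v_{2j-1},
and the j-th summand of the level becomes -|s_j|.\<close>

definition tee_param :: "nat \<Rightarrow> (nat \<Rightarrow> real) \<Rightarrow> (nat \<Rightarrow> real) \<Rightarrow> nat \<Rightarrow> real" where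
  "tee_param m \<delta> s k = (if k \<in> {1..2*m} then
      if even k then max (s (k div 2)) 0 else \<delta> ((k+1) div 2) * min (s ((k+1) div 2)) 0
    else 0)"

lemma tee_param_odd: "j \<in> {1..m} \<Longrightarrow> tee_param m \<delta> s (2*j-1) = \<delta> j * min (s j) 0"
  by (auto simp: tee_param_def)

lemma tee_param_even: "j \<in> {1..m} \<Longrightarrow> tee_param m \<delta> s (2*j) = max (s j) 0"
  by (auto simp: tee_param_def)

lemma tee_param_outside:
  assumes "k \<notin> {1..2*m}"
  shows "tee_param m \<delta> s k = 0"
  unfolding tee_param_def using assms by (rule if_not_P)

lemma HT_tee_param: "((\<lambda>_. 0), tee_param m \<delta> s) \<in> HT l m"
proof -
  have "tee_param m \<delta> s (2*j-1) * tee_param m \<delta> s (2*j) = 0 \<and> tee_param m \<delta> s (2*j) \<ge> 0"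
    if "j \<in> {1..m}" for j
    unfolding tee_param_odd[OF that] tee_param_even[OF that] by (simp add: min_def max_def)
  then show ?thesis
    by (simp add: HT_def tee_param_outside)
qed

lemma tee_param_inverse:
  assumes "\<forall>j\<in>{1..m}. \<delta> j = -1 \<or> \<delta> j = 1" and "j \<in> {1..m}"
  shows "tee_param m \<delta> s (2*j) + \<delta> j * tee_param m \<delta> s (2*j-1) = s j"
  unfolding tee_param_odd[OF assms(2)] tee_param_even[OF assms(2)]
  using sign_mult_self[OF assms] by (simp add: min_def max_def mult.assoc[symmetric])

lemma tee_param_descending:
  assumes "\<forall>j\<in>{1..m}. \<delta> j = -1 \<or> \<delta> j = 1" and "j \<in> {1..m}"
  shows "\<delta> j * tee_param m \<delta> s (2*j-1) \<le> 0"
  unfolding tee_param_odd[OF assms(2)]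
  using sign_mult_self[OF assms] by (simp add: min_def mult.assoc[symmetric])

lemma level_tee_param:
  assumes "\<forall>j\<in>{1..m}. \<delta> j = -1 \<or> \<delta> j = 1"
  shows "level l m \<delta> ((\<lambda>_. 0), tee_param m \<delta> s) = - (\<Sum>j=1..m. \<bar>s j\<bar>)"
proof -
  have "\<delta> j * tee_param m \<delta> s (2*j-1) - tee_param m \<delta> s (2*j) = - \<bar>s j\<bar>" if "j \<in> {1..m}" for j
    unfolding tee_param_odd[OF that] tee_param_even[OF that]
    using sign_mult_self[OF assms that] by (simp add: min_def max_def mult.assoc[symmetric])
  then show ?thesis
    by (simp add: level_def sum_negf[symmetric])
qed

lemma tee_param_eq:
  assumes \<delta>: "\<forall>j\<in>{1..m}. \<delta> j = -1 \<or> \<delta> j = 1"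
    and w: "((\<lambda>_. 0), w) \<in> HT l m" "\<forall>j\<in>{1..m}. \<delta> j * w (2*j-1) \<le> 0"
  shows "tee_param m \<delta> (\<lambda>j. w (2*j) + \<delta> j * w (2*j-1)) = w"
proof
  fix k
  have tee: "w (2*j-1) * w (2*j) = 0" "w (2*j) \<ge> 0" "\<delta> j * w (2*j-1) \<le> 0" "\<delta> j * \<delta> j = 1"
    if "j \<in> {1..m}" for j
    using w that sign_mult_self[OF \<delta> that] by (auto simp: HT_def)
  show "tee_param m \<delta> (\<lambda>j. w (2*j) + \<delta> j * w (2*j-1)) k = w k"
  proof (cases "k \<in> {1..2*m}")
    case True
    then show ?thesis
    proof (cases rule: index_pair_cases)
      case (1 j)
      then show ?thesis
        using tee[OF \<open>j \<in> {1..m}\<close>] by (auto simp: tee_param_even max_def)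
    next
      case (2 j)
      then show ?thesis
        unfolding \<open>k = 2*j-1\<close> tee_param_odd[OF \<open>j \<in> {1..m}\<close>]
        using tee[OF \<open>j \<in> {1..m}\<close>] by (auto simp: min_def mult.assoc[symmetric])
    qed
  qed (use w in \<open>simp add: HT_def tee_param_outside\<close>)
qed

lemma continuous_on_tee_param:
  assumes "\<And>j. continuous_on S (\<lambda>x. f x j)"
  shows "continuous_on S (\<lambda>x. tee_param m \<delta> (f x) k)"
  by (cases "k \<in> {1..2*m}"; cases "even k"; simp only: tee_param_def if_True if_False)
    (auto intro!: continuous_intros assms)

text \<open>The factor x_j |x_j| puts cell m \<delta> e x at level -e |x|^2.\<close>

definition cell :: "nat \<Rightarrow> (nat \<Rightarrow> real) \<Rightarrow> real \<Rightarrow> (nat \<Rightarrow> real) \<Rightarrow> point" where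
  "cell m \<delta> e x = ((\<lambda>_. 0), tee_param m \<delta> (\<lambda>j. e * x j * \<bar>x j\<bar>))"

lemma HT_cell: "cell m \<delta> e x \<in> HT l m"
  by (simp add: cell_def HT_tee_param)

lemma continuous_on_cell: "continuous_on S (cell m \<delta> e)"
  unfolding cell_def
  by (intro continuous_intros continuous_on_coordinatewise_then_product continuous_on_tee_param)

lemma level_cell:
  assumes "\<forall>j\<in>{1..m}. \<delta> j = -1 \<or> \<delta> j = 1" and "0 \<le> e"
  shows "level l m \<delta> (cell m \<delta> e x) = - e * (\<Sum>j=1..m. (x j)\<^sup>2)"
  using assms
  by (simp add: cell_def level_tee_param abs_mult mult.assoc abs_mult_self_eq power2_eq_square
      sum_distrib_left sum_negf)

lemma inj_on_cell:
  assumes \<delta>: "\<forall>j\<in>{1..m}. \<delta> j = -1 \<or> \<delta> j = 1" and "0 < e"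
  shows "inj_on (cell m \<delta> e) (cdisc m)"
proof
  fix x y assume x: "x \<in> cdisc m" and y: "y \<in> cdisc m" and eq: "cell m \<delta> e x = cell m \<delta> e y"
  show "x = y"
  proof
    fix j
    show "x j = y j"
    proof (cases "j \<in> {1..m}")
      case True
      have "tee_param m \<delta> (\<lambda>j. e * x j * \<bar>x j\<bar>) = tee_param m \<delta> (\<lambda>j. e * y j * \<bar>y j\<bar>)"
        using eq by (simp add: cell_def)
      then have "e * x j * \<bar>x j\<bar> = e * y j * \<bar>y j\<bar>"
        using tee_param_inverse[OF \<delta> True, of "\<lambda>j. e * x j * \<bar>x j\<bar>"]
          tee_param_inverse[OF \<delta> True, of "\<lambda>j. e * y j * \<bar>y j\<bar>"] by simp
      then have "x j * \<bar>x j\<bar> = y j * \<bar>y j\<bar>"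
        using \<open>0 < e\<close> by (simp add: mult.assoc)
      then show ?thesis
        by (metis sqrt_mult_abs_self)
    qed (use x y in \<open>simp add: cdisc_def\<close>)
  qed
qed

definition Neps_with_cell :: "nat \<Rightarrow> nat \<Rightarrow> (nat \<Rightarrow> real) \<Rightarrow> real \<Rightarrow> point set" where
  "Neps_with_cell l m \<delta> e = Neps l m \<delta> (-e) \<union> cell m \<delta> e ` cdisc m"

lemma descending_in_Neps_with_cell:
  assumes \<delta>: "\<forall>j\<in>{1..m}. \<delta> j = -1 \<or> \<delta> j = 1" and "0 < e"
    and w: "((\<lambda>_. 0), w) \<in> HT l m" "\<forall>j\<in>{1..m}. \<delta> j * w (2*j-1) \<le> 0"
  shows "((\<lambda>_. 0), w) \<in> Neps_with_cell l m \<delta> e"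
proof (cases "level l m \<delta> ((\<lambda>_. 0), w) \<le> -e")
  case True
  then show ?thesis
    using w by (simp add: Neps_with_cell_def Neps_eq_sublevel)
next
  case False
  define s where "s j = w (2*j) + \<delta> j * w (2*j-1)" for j
  define x where "x j = sqrt (s j / e)" for j
  have w_eq: "tee_param m \<delta> s = w"
    unfolding s_def using tee_param_eq[OF \<delta> w] .
  have "s j = 0" if "j \<notin> {1..m}" for j
  proof -
    have "2*j \<notin> {1..2*m}" "2*j-1 \<notin> {1..2*m}"
      using that by auto
    then show ?thesis
      using w(1) by (simp add: s_def HT_def)
  qed
  then have x_outside: "x j = 0" if "j \<notin> {1..m}" for j
    using that by (simp add: x_def)
  have "e * x j * \<bar>x j\<bar> = s j" for j
    using \<open>0 < e\<close> by (simp add: x_def mult.assoc sqrt_mult_abs_sqrt)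
  then have cell_x: "cell m \<delta> e x = ((\<lambda>_. 0), w)"
    by (simp add: cell_def w_eq)
  have "(\<Sum>j=1..m. (x j)\<^sup>2) = (\<Sum>j=1..m. \<bar>s j\<bar>) / e"
    using \<open>0 < e\<close> by (simp add: x_def power2_eq_square sum_divide_distrib abs_div)
  also have "\<dots> = - level l m \<delta> ((\<lambda>_. 0), w) / e"
    using level_tee_param[OF \<delta>, of l s] by (simp add: w_eq)
  also have "\<dots> < 1"
    using False \<open>0 < e\<close> by (simp add: neg_divide_less_eq less_divide_eq)
  finally have "x \<in> cdisc m"
    using x_outside by (simp add: cdisc_def)
  then show ?thesis
    using cell_x by (metis Neps_with_cell_def UnI2 image_eqI)
qed

lemma Neps_with_cell_subset_HT: "Neps_with_cell l m \<delta> e \<subseteq> HT l m"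
  by (auto simp: Neps_with_cell_def Neps_eq_sublevel HT_cell)

lemma cell_attached_Neps_with_cell:
  assumes \<delta>: "\<forall>j\<in>{1..m}. \<delta> j = -1 \<or> \<delta> j = 1" and "0 < e"
  shows "cell_attached (top_of_set (Neps l m \<delta> (-e))) m (top_of_set (Neps_with_cell l m \<delta> e))"
  unfolding Neps_with_cell_def
proof (rule cell_attached_subspace[OF continuous_on_cell closed_Neps])
  have level: "level l m \<delta> (cell m \<delta> e x) = - e * (\<Sum>j=1..m. (x j)\<^sup>2)" for x
    using level_cell[OF \<delta>] \<open>0 < e\<close> by simp
  show "cell m \<delta> e ` csphere m \<subseteq> Neps l m \<delta> (-e)"
    by (auto simp: Neps_eq_sublevel HT_cell level csphere_def)
  show "inj_on (cell m \<delta> e) (cdisc m - csphere m)"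
    using inj_on_cell[OF \<delta> \<open>0 < e\<close>] by (rule inj_on_subset) blast
  show "Neps l m \<delta> (-e) \<inter> cell m \<delta> e ` (cdisc m - csphere m) = {}"
    using \<open>0 < e\<close> by (auto simp: Neps_eq_sublevel level cdisc_def csphere_def)
qed

definition descend :: "nat \<Rightarrow> (nat \<Rightarrow> real) \<Rightarrow> real \<Rightarrow> point \<Rightarrow> point" where
  "descend m \<delta> t p = ((\<lambda>i. (1 - t) * fst p i),
     (\<lambda>k. if k \<in> {1..2*m} \<and> odd k
          then snd p k - t * \<delta> ((k+1) div 2) * max 0 (\<delta> ((k+1) div 2) * snd p k) else snd p k))"

lemma descend_odd:
  assumes "j \<in> {1..m}"
  shows "snd (descend m \<delta> t p) (2*j-1) = snd p (2*j-1) - t * \<delta> j * max 0 (\<delta> j * snd p (2*j-1))"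
  using assms by (auto simp: descend_def)

lemma descend_even: "j \<in> {1..m} \<Longrightarrow> snd (descend m \<delta> t p) (2*j) = snd p (2*j)"
  by (auto simp: descend_def)

lemma descend_outside: "k \<notin> {1..2*m} \<Longrightarrow> snd (descend m \<delta> t p) k = snd p k"
  unfolding descend_def by auto

lemma descend_zero: "descend m \<delta> 0 p = p"
  by (simp add: descend_def prod_eq_iff fun_eq_iff)

lemma continuous_on_descend [continuous_intros]:
  assumes "continuous_on S f" "continuous_on S g"
  shows "continuous_on S (\<lambda>x. descend m \<delta> (f x) (g x))"
proof -
  have "continuous_on S (\<lambda>x. snd (descend m \<delta> (f x) (g x)) k)" for k
    by (cases "k \<in> {1..2*m} \<and> odd k") (auto simp: descend_def intro!: continuous_intros assms)
  then show ?thesis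
    unfolding descend_def by (auto intro!: continuous_intros continuous_on_coordinatewise_then_product assms)
qed

lemma HT_descend:
  assumes "p \<in> HT l m" "0 \<le> t" "t \<le> 1"
  shows "descend m \<delta> t p \<in> HT l m"
proof -
  obtain u v where p: "p = (u, v)"
    by fastforce
  define w where "w = snd (descend m \<delta> t p)"
  have "\<forall>j\<in>{1..m}. w (2*j-1) * w (2*j) = 0 \<and> w (2*j) \<ge> 0"
  proof
    fix j assume j: "j \<in> {1..m}"
    have "v (2*j-1) * v (2*j) = 0" "v (2*j) \<ge> 0"
      using assms(1) j by (auto simp: HT_def p)
    then show "w (2*j-1) * w (2*j) = 0 \<and> w (2*j) \<ge> 0"
      unfolding w_def descend_odd[OF j] descend_even[OF j] by (auto simp: p)
  qed
  moreover have "\<forall>i. i \<notin> {1..2*m} \<longrightarrow> w i = 0"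
    using assms(1) by (simp add: w_def descend_outside HT_def p)
  moreover have "descend m \<delta> t p = ((\<lambda>i. (1 - t) * u i), w)"
    by (simp add: p w_def descend_def)
  ultimately show ?thesis
    using assms by (simp add: HT_def p)
qed

lemma level_descend_le:
  assumes \<delta>: "\<forall>j\<in>{1..m}. \<delta> j = -1 \<or> \<delta> j = 1" and "p \<in> HT l m" "0 \<le> t" "t \<le> 1"
  shows "level l m \<delta> (descend m \<delta> t p) \<le> level l m \<delta> p"
proof -
  have "(\<Sum>i=1..l. (1 - t) * fst p i) \<le> (\<Sum>i=1..l. fst p i)"
    using assms by (intro sum_mono) (auto simp: HT_def mult_left_le_one_le)
  moreover have "\<delta> j * snd (descend m \<delta> t p) (2*j-1) \<le> \<delta> j * snd p (2*j-1)" if "j \<in> {1..m}" for j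
  proof -
    let ?a = "\<delta> j * snd p (2*j-1)"
    have "\<delta> j * snd (descend m \<delta> t p) (2*j-1) = ?a - t * (\<delta> j * \<delta> j) * max 0 ?a"
      unfolding descend_odd[OF that] by (simp add: algebra_simps)
    then show ?thesis
      using sign_mult_self[OF \<delta> that] assms(3) by simp
  qed
  ultimately show ?thesis
    unfolding level_def by (auto simp: descend_def descend_even intro!: add_mono sum_mono diff_mono)
qed

lemma descend_fixed:
  assumes "fst p = (\<lambda>_. 0)" "\<forall>j\<in>{1..m}. \<delta> j * snd p (2*j-1) \<le> 0"
  shows "descend m \<delta> t p = p"
proof (rule prod_eqI)
  show "snd (descend m \<delta> t p) = snd p"
  proof
    fix k
    show "snd (descend m \<delta> t p) k = snd p k"
    proof (cases "k \<in> {1..2*m}")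
      case True
      then show ?thesis
      proof (cases rule: index_pair_cases)
        case (2 j)
        then show ?thesis
          unfolding \<open>k = 2*j-1\<close> descend_odd[OF \<open>j \<in> {1..m}\<close>]
          using bspec[OF assms(2) \<open>j \<in> {1..m}\<close>] by (simp add: max_absorb1)
      qed (simp add: descend_even)
    qed (simp add: descend_outside)
  qed
qed (simp add: descend_def assms)

lemma descend_one_descending:
  assumes "\<forall>j\<in>{1..m}. \<delta> j = -1 \<or> \<delta> j = 1" and "j \<in> {1..m}"
  shows "\<delta> j * snd (descend m \<delta> 1 p) (2*j-1) \<le> 0"
proof -
  let ?a = "\<delta> j * snd p (2*j-1)"
  have "\<delta> j * snd (descend m \<delta> 1 p) (2*j-1) = ?a - (\<delta> j * \<delta> j) * max 0 ?a"
    unfolding descend_odd[OF assms(2)] by (simp add: algebra_simps)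
  then show ?thesis
    using sign_mult_self[OF assms] by simp
qed

lemma homotopic_with_canon_id_descend:
  assumes \<delta>: "\<forall>j\<in>{1..m}. \<delta> j = -1 \<or> \<delta> j = 1" and "0 < e"
  shows "homotopic_with_canon (\<lambda>x. True) (Neps_with_cell l m \<delta> e) (Neps_with_cell l m \<delta> e)
           id (descend m \<delta> 1)"
    (is "homotopic_with_canon _ ?Y _ _ _")
proof (rule homotopic_with_canonI[where h="\<lambda>z. descend m \<delta> (fst z) (snd z)"])
  show "(\<lambda>z. descend m \<delta> (fst z) (snd z)) ` ({0..1} \<times> ?Y) \<subseteq> ?Y"
  proof (rule image_subsetI)
    fix z assume "z \<in> {0..1::real} \<times> ?Y"
    then obtain t p where z: "z = (t, p)" and t: "0 \<le> t" "t \<le> 1" and p: "p \<in> ?Y"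
      by auto
    show "descend m \<delta> (fst z) (snd z) \<in> ?Y"
    proof (cases "p \<in> Neps l m \<delta> (-e)")
      case True
      then show ?thesis
        using HT_descend[of p l m t \<delta>] level_descend_le[OF \<delta>, of p l t] z t
        by (auto simp: Neps_with_cell_def Neps_eq_sublevel)
    next
      case False
      then obtain x where "p = cell m \<delta> e x"
        using p by (auto simp: Neps_with_cell_def)
      then have "descend m \<delta> t p = p"
        using tee_param_descending[OF \<delta>] by (intro descend_fixed) (simp_all add: cell_def)
      then show ?thesis
        using z p by simp
    qed
  qed
qed (simp_all add: descend_zero continuous_intros)

lemma homotopic_with_canon_descend_const:
  assumes \<delta>: "\<forall>j\<in>{1..m}. \<delta> j = -1 \<or> \<delta> j = 1" and "0 < e"
  shows "homotopic_with_canon (\<lambda>x. True) (Neps_with_cell l m \<delta> e) (Neps_with_cell l m \<delta> e)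
           (descend m \<delta> 1) (\<lambda>_. ((\<lambda>_. 0), (\<lambda>_. 0)))"
    (is "homotopic_with_canon _ ?Y _ _ _")
proof (rule homotopic_with_canonI[where h="\<lambda>z. dilate (1 - fst z) (descend m \<delta> 1 (snd z))"])
  show "(\<lambda>z. dilate (1 - fst z) (descend m \<delta> 1 (snd z))) ` ({0..1} \<times> ?Y) \<subseteq> ?Y"
  proof (rule image_subsetI)
    fix z assume "z \<in> {0..1::real} \<times> ?Y"
    then obtain t p where z: "z = (t, p)" and t: "0 \<le> t" "t \<le> 1" and "p \<in> ?Y"
      by auto
    then have p: "p \<in> HT l m"
      using Neps_with_cell_subset_HT by blast
    define w where "w = snd (dilate (1 - t) (descend m \<delta> 1 p))"
    have "dilate (1 - t) (descend m \<delta> 1 p) = ((\<lambda>_. 0), w)"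
      by (simp add: w_def dilate_def descend_def)
    moreover have "dilate (1 - t) (descend m \<delta> 1 p) \<in> HT l m"
      using t p by (intro HT_dilate HT_descend) auto
    moreover have "\<delta> j * w (2*j-1) \<le> 0" if "j \<in> {1..m}" for j
      using descend_one_descending[OF \<delta> that, of p] t
      by (simp add: w_def dilate_def mult.left_commute[of "\<delta> j"] mult_nonneg_nonpos)
    ultimately show "dilate (1 - fst z) (descend m \<delta> 1 (snd z)) \<in> ?Y"
      using descending_in_Neps_with_cell[OF \<delta> \<open>0 < e\<close>] z by auto
  qed
qed (rule continuous_intros | simp add: dilate_def descend_def)+

lemma contractible_Neps_with_cell:
  assumes "\<forall>j\<in>{1..m}. \<delta> j = -1 \<or> \<delta> j = 1" and "0 < e"
  shows "contractible (Neps_with_cell l m \<delta> e)"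
  unfolding contractible_def
  using homotopic_with_trans[OF homotopic_with_canon_id_descend homotopic_with_canon_descend_const]
    assms by blast

lemma homotopy_eqv_Neps_Neps_with_cell:
  assumes "\<forall>j\<in>{1..m}. \<delta> j = -1 \<or> \<delta> j = 1" and "0 < e"
  shows "Neps l m \<delta> e homotopy_eqv Neps_with_cell l m \<delta> e"
proof (rule contractible_space_imp_homotopy_equivalent_space)
  show "contractible_space (top_of_set (Neps l m \<delta> e))"
    "contractible_space (top_of_set (Neps_with_cell l m \<delta> e))"
    using contractible_Neps contractible_Neps_with_cell assms by auto
  show "((\<lambda>_. 0), (\<lambda>_. 0)) \<in> topspace (top_of_set (Neps l m \<delta> e))"
    using assms by (simp add: Neps_eq_sublevel HT_def level_def)
  show "cell m \<delta> e (\<lambda>_. 0) \<in> topspace (top_of_set (Neps_with_cell l m \<delta> e))"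
    by (auto simp: Neps_with_cell_def cdisc_def)
qed

theorem mainTheorem8:
  fixes l m :: nat and \<delta> :: "nat \<Rightarrow> real" and \<epsilon> :: real
  assumes "\<forall>j\<in>{1..m}. \<delta> j = -1 \<or> \<delta> j = 1"
    and "\<epsilon> > 0"
  shows "\<exists>Z :: (((nat \<Rightarrow> real) \<times> (nat \<Rightarrow> real)) + (nat \<Rightarrow> real)) topology.
           cell_attached (top_of_set (Neps l m \<delta> (-\<epsilon>))) m Z
           \<and> top_of_set (Neps l m \<delta> \<epsilon>) homotopy_equivalent_space Z"
proof -
  let ?Y = "top_of_set (Neps_with_cell l m \<delta> \<epsilon>)"
  let ?Z = "pullback_topology (Inl ` topspace ?Y) projl ?Y
    :: (((nat \<Rightarrow> real) \<times> (nat \<Rightarrow> real)) + (nat \<Rightarrow> real)) topology"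
  have YZ: "?Y homeomorphic_space ?Z"
    by (rule homeomorphic_space_Inl)
  note homotopy_eqv_Neps_Neps_with_cell[OF assms]
  also have "?Y homotopy_equivalent_space ?Z"
    using YZ by (rule homeomorphic_imp_homotopy_equivalent_space)
  finally have "top_of_set (Neps l m \<delta> \<epsilon>) homotopy_equivalent_space ?Z" .
  moreover have "cell_attached (top_of_set (Neps l m \<delta> (-\<epsilon>))) m ?Z"
    using cell_attached_homeomorphic_space[OF cell_attached_Neps_with_cell[OF assms] YZ] .
  ultimately show ?thesis
    by blast
qed

end
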